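(* In the standing setting below, let $X_i=(x_i,u_i)\in\mathbb{X}\times\mathbb{R}$ for $i=0,1$, and set $u_i'=F_{X_0X_1}(x_i)$ and $X_i'=(x_i,u_i')$ for $i=0,1$. Then $F_{X_0X_1}=F_{X_0'X_1'}$ on $\mathbb{X}$.
   Context: Standing setting: $\mathbb{X},\mathbb{Y}\subset\mathbb{R}^n$ are compact with non-empty interior; $c:\mathbb{X}\times\mathbb{Y}\to\mathbb{R}$ has continuous $D_xc$, $D_yc$, and continuous mixed second derivatives with $D^2_{xy}c=(D^2_{yx}c)^T$; for each $x$ the map $y\mapsto -D_xc(x,y)$ is injective on $\mathbb{Y}$ and for each $y$ the map $x\mapsto -D_yc(x,y)$ is injective on $\mathbb{X}$; $D^2_{xy}c(x,y)$ is invertible everywhere; for every $y$ the set $\{-D_yc(x,y):x\in\mathbb{X}\}$ is convex and for every $x$ the set $\{-D_xc(x,y):y\in\mathbb{Y}\}$ is convex. $c$-chord: for $X_i=(x_i,u_i)\in\mathbb{X}\times\mathbb{R}$, $F_{X_0X_1}(x)=\sup\{-c(x,y)+h: y\in\mathbb{Y},h\in\mathbb{R},-c(x_i,y)+h\le u_i, i=0,1\}$. *)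

theory Defs
  imports "HOL-Analysis.Analysis"
begin

text \<open>Points of R^n are elements of a Euclidean space 'a.
  Dxc x y and Dyc x y are the gradients of c in x and in y; Dxyc x y is the
  derivative of y |-> Dxc x y (the matrix D^2_xy c), Dyxc x y the derivative of
  x |-> Dyc x y (the matrix D^2_yx c).\<close>

definition standing_setting ::
  "'a::euclidean_space set \<Rightarrow> 'a set \<Rightarrow> ('a \<Rightarrow> 'a \<Rightarrow> real)
   \<Rightarrow> ('a \<Rightarrow> 'a \<Rightarrow> 'a) \<Rightarrow> ('a \<Rightarrow> 'a \<Rightarrow> 'a)
   \<Rightarrow> ('a \<Rightarrow> 'a \<Rightarrow> 'a \<Rightarrow>\<^sub>L 'a) \<Rightarrow> ('a \<Rightarrow> 'a \<Rightarrow> 'a \<Rightarrow>\<^sub>L 'a) \<Rightarrow> bool" where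
  "standing_setting X Y c Dxc Dyc Dxyc Dyxc \<longleftrightarrow>
     compact X \<and> compact Y \<and> interior X \<noteq> {} \<and> interior Y \<noteq> {} \<and>
     (\<forall>x\<in>X. \<forall>y\<in>Y. ((\<lambda>x'. c x' y) has_derivative (\<lambda>v. Dxc x y \<bullet> v)) (at x within X)) \<and>
     (\<forall>x\<in>X. \<forall>y\<in>Y. ((\<lambda>y'. c x y') has_derivative (\<lambda>v. Dyc x y \<bullet> v)) (at y within Y)) \<and>
     continuous_on (X \<times> Y) (\<lambda>(x, y). Dxc x y) \<and>
     continuous_on (X \<times> Y) (\<lambda>(x, y). Dyc x y) \<and>
     (\<forall>x\<in>X. \<forall>y\<in>Y. ((\<lambda>y'. Dxc x y') has_derivative blinfun_apply (Dxyc x y)) (at y within Y)) \<and>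
     (\<forall>x\<in>X. \<forall>y\<in>Y. ((\<lambda>x'. Dyc x' y) has_derivative blinfun_apply (Dyxc x y)) (at x within X)) \<and>
     continuous_on (X \<times> Y) (\<lambda>(x, y). Dxyc x y) \<and>
     continuous_on (X \<times> Y) (\<lambda>(x, y). Dyxc x y) \<and>
     (\<forall>x\<in>X. \<forall>y\<in>Y. \<forall>u v. (Dxyc x y u) \<bullet> v = u \<bullet> (Dyxc x y v)) \<and>
     (\<forall>x\<in>X. inj_on (\<lambda>y. - Dxc x y) Y) \<and>
     (\<forall>y\<in>Y. inj_on (\<lambda>x. - Dyc x y) X) \<and>
     (\<forall>x\<in>X. \<forall>y\<in>Y. bij (blinfun_apply (Dxyc x y))) \<and>
     (\<forall>y\<in>Y. convex ((\<lambda>x. - Dyc x y) ` X)) \<and>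
     (\<forall>x\<in>X. convex ((\<lambda>y. - Dxc x y) ` Y))"

definition cchord ::
  "('a \<Rightarrow> 'b \<Rightarrow> real) \<Rightarrow> 'b set \<Rightarrow> 'a \<Rightarrow> real \<Rightarrow> 'a \<Rightarrow> real \<Rightarrow> 'a \<Rightarrow> real" where
  "cchord c Y x0 u0 x1 u1 x =
     Sup {- c x y + h | y h. y \<in> Y \<and> - c x0 y + h \<le> u0 \<and> - c x1 y + h \<le> u1}"

end

theory Submission
  imports Defs
begin

text \<open>Replacing the heights u_i by u_i' = F(x_i) leaves the set of admissible pairs (y, h)
  unchanged: an admissible pair satisfies -c(x_i, y) + h \<le> F(x_i) by the definition of the
  supremum, and F(x_i) \<le> u_i because every candidate value at x_i is bounded by u_i.
  No property of c, X or Y beyond the definition of the chord is needed.\<close>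

lemma cchord_at_nodes_ge:
  assumes "y \<in> Y" "- c x0 y + h \<le> u0" "- c x1 y + h \<le> u1"
  shows "- c x0 y + h \<le> cchord c Y x0 u0 x1 u1 x0"
    and "- c x1 y + h \<le> cchord c Y x0 u0 x1 u1 x1"
proof -
  let ?V = "\<lambda>z. {- c z y + h | y h. y \<in> Y \<and> - c x0 y + h \<le> u0 \<and> - c x1 y + h \<le> u1}"
  have "bdd_above (?V x0)"
    by (auto intro!: bdd_aboveI[where M = u0])
  then show "- c x0 y + h \<le> cchord c Y x0 u0 x1 u1 x0"
    unfolding cchord_def by (rule cSup_upper[rotated]) (use assms in blast)
  have "bdd_above (?V x1)"
    by (auto intro!: bdd_aboveI[where M = u1])
  then show "- c x1 y + h \<le> cchord c Y x0 u0 x1 u1 x1"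
    unfolding cchord_def by (rule cSup_upper[rotated]) (use assms in blast)
qed

lemma cchord_at_nodes_le:
  assumes "Y \<noteq> {}"
  shows "cchord c Y x0 u0 x1 u1 x0 \<le> u0"
    and "cchord c Y x0 u0 x1 u1 x1 \<le> u1"
proof -
  obtain y where y: "y \<in> Y" using assms by blast
  define h where "h = min (u0 + c x0 y) (u1 + c x1 y)"
  have "- c x0 y + h \<le> u0" "- c x1 y + h \<le> u1"
    by (simp_all add: h_def)
  then have "{- c z y + h | y h. y \<in> Y \<and> - c x0 y + h \<le> u0 \<and> - c x1 y + h \<le> u1} \<noteq> {}" for z
    using y by blast
  then show "cchord c Y x0 u0 x1 u1 x0 \<le> u0" "cchord c Y x0 u0 x1 u1 x1 \<le> u1"
    unfolding cchord_def by (auto intro: cSup_least)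
qed

lemma cchord_with_own_node_values:
  "cchord c Y x0 (cchord c Y x0 u0 x1 u1 x0) x1 (cchord c Y x0 u0 x1 u1 x1)
     = cchord c Y x0 u0 x1 u1"
proof -
  let ?v0 = "cchord c Y x0 u0 x1 u1 x0" and ?v1 = "cchord c Y x0 u0 x1 u1 x1"
  have "y \<in> Y \<and> - c x0 y + h \<le> ?v0 \<and> - c x1 y + h \<le> ?v1 \<longleftrightarrow>
        y \<in> Y \<and> - c x0 y + h \<le> u0 \<and> - c x1 y + h \<le> u1" for y h
  proof
    assume admissible: "y \<in> Y \<and> - c x0 y + h \<le> ?v0 \<and> - c x1 y + h \<le> ?v1"
    then have "Y \<noteq> {}"
      by blast
    then have "?v0 \<le> u0" "?v1 \<le> u1"
      by (rule cchord_at_nodes_le)+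
    with admissible show "y \<in> Y \<and> - c x0 y + h \<le> u0 \<and> - c x1 y + h \<le> u1"
      by linarith
  next
    assume "y \<in> Y \<and> - c x0 y + h \<le> u0 \<and> - c x1 y + h \<le> u1"
    then show "y \<in> Y \<and> - c x0 y + h \<le> ?v0 \<and> - c x1 y + h \<le> ?v1"
      using cchord_at_nodes_ge[of y Y c x0 h u0 x1 u1] by blast
  qed
  then show ?thesis
    unfolding cchord_def by (intro ext) simp
qed

theorem lemma3p5:
  fixes X Y :: "'a::euclidean_space set" and c :: "'a \<Rightarrow> 'a \<Rightarrow> real"
    and Dxc Dyc :: "'a \<Rightarrow> 'a \<Rightarrow> 'a" and Dxyc Dyxc :: "'a \<Rightarrow> 'a \<Rightarrow> 'a \<Rightarrow>\<^sub>L 'a"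
    and x0 x1 :: 'a and u0 u1 :: real
  assumes "standing_setting X Y c Dxc Dyc Dxyc Dyxc"
    and "x0 \<in> X" and "x1 \<in> X"
  shows "\<forall>x\<in>X. cchord c Y x0 (cchord c Y x0 u0 x1 u1 x0) x1 (cchord c Y x0 u0 x1 u1 x1) x
               = cchord c Y x0 u0 x1 u1 x"
  by (simp add: cchord_with_own_node_values)

end
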